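(* Let $N\ge1$, $k>0$, $\mathcal{E}>0$, $\gamma=\mathcal{E}/k$. Suppose $v_1,\dots,v_N$ are pairwise distinct nonzero numbers satisfying $$\frac{\mathcal{E}(1-v_k^2)+k(1-N)v_k}{k v_k^2}=\sum_{j\neq k}^{N}\frac{2}{v_j-v_k},\qquad k=1,\dots,N,$$ and put $E=-\frac{kN^2}{8}+\frac{\mathcal{E}}{2}\sum_{j=1}^N v_j$. Define $$\psi(x)=\exp(-\gamma\cosh x)\prod_{j=1}^N\big(e^{x/2}-v_je^{-x/2}\big),\qquad V(x)=\gamma^2\sinh^2x-(N+1)\gamma\cosh x.$$ Then $-\psi''(x)+V(x)\psi(x)=\frac{2E}{k}\,\psi(x)$ for all real $x$. *)

theory Defs
  imports "HOL-Analysis.Analysis"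
begin

definition psiN :: "real \<Rightarrow> nat \<Rightarrow> (nat \<Rightarrow> complex) \<Rightarrow> real \<Rightarrow> complex" where
  "psiN \<gamma> N v x = complex_of_real (exp (- \<gamma> * cosh x)) *
     (\<Prod>j\<in>{1..N}. complex_of_real (exp (x / 2)) - v j * complex_of_real (exp (- x / 2)))"

definition VN :: "real \<Rightarrow> nat \<Rightarrow> real \<Rightarrow> real" where
  "VN \<gamma> N x = \<gamma>^2 * (sinh x)^2 - (real N + 1) * \<gamma> * cosh x"

end

theory Submission
  imports Defs "HOL-Computational_Algebra.Polynomial"
begin

(* With z = e^x and
   P(z) = (z - v 1) ... (z - v N), conjugating its Schroedinger operator by
   exp(-gamma cosh x - N x/2) turns the eigenvalue equation for psi into the polynomial identity
     -z^2 P'' + (gamma z^2 + (N - 1) z - gamma) P' - gamma (N z + v 1 + ... + v N) P = 0.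
   Its left-hand side has degree < N: P is monic with subleading coefficient -(v 1 + ... + v N),
   which makes the coefficients of z^(N+1) and z^N cancel. At z = v k it equals P'(v k) times the
   k-th Bethe equation, since P''(v k) = 2 P'(v k) * sum_{j ~= k} 1/(v k - v j). A polynomial of
   degree < N with the N distinct roots v 1, ..., v N is zero. *)

definition razavy_op :: "'a::idom \<Rightarrow> nat \<Rightarrow> 'a \<Rightarrow> 'a poly \<Rightarrow> 'a poly" where
  "razavy_op c N s P =
     - [:0, 0, 1:] * pderiv (pderiv P) + [:- c, of_nat N - 1, c:] * pderiv P - [:c * s, c * of_nat N:] * P"

lemma poly_razavy_op:
  "poly (razavy_op c N s P) z =
     - z\<^sup>2 * poly (pderiv (pderiv P)) z + (c * z\<^sup>2 + (of_nat N - 1) * z - c) * poly (pderiv P) z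
     - c * (of_nat N * z + s) * poly P z"
  by (simp add: razavy_op_def algebra_simps power2_eq_square)

lemma coeff_razavy_op_Suc:
  "coeff (razavy_op c N s P) (Suc j) =
     c * (of_nat j - of_nat N) * coeff P j
     + (of_nat (Suc j) * (of_nat N - of_nat (Suc j)) - c * s) * coeff P (Suc j)
     - c * of_nat (Suc (Suc j)) * coeff P (Suc (Suc j))"
  by (cases j) (simp_all add: razavy_op_def coeff_pderiv algebra_simps)

lemma degree_razavy_op_less:
  fixes P :: "'a::idom poly"
  assumes "degree P = Suc n" and "lead_coeff P = 1" and "coeff P n = - s"
  shows "degree (razavy_op c (Suc n) s P) < Suc n"
proof (rule degree_lessI)
  show "\<forall>k\<ge>Suc n. coeff (razavy_op c (Suc n) s P) k = 0"
  proof (intro allI impI)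
    fix k assume "Suc n \<le> k"
    then obtain j where k: "k = Suc j" and "n \<le> j" by (cases k) auto
    have lead: "coeff P (Suc n) = 1" using assms(1,2) by simp
    consider "j = n" | "j = Suc n" | "j > Suc n" using \<open>n \<le> j\<close> by linarith
    then show "coeff (razavy_op c (Suc n) s P) k = 0"
      by cases (simp_all add: k coeff_razavy_op_Suc assms(1,3) lead coeff_eq_0)
  qed
qed simp

lemma coeff_prod_linear_factors_pred:
  fixes v :: "'b \<Rightarrow> 'a::idom"
  assumes "finite A" and "card A = Suc n"
  shows "coeff (\<Prod>j\<in>A. [:- v j, 1:]) n = - (\<Sum>j\<in>A. v j)"
  using assms
proof (induction A arbitrary: n rule: finite_induct)
  case empty
  then show ?case by simp
next
  case (insert a A)
  show ?case
  proof (cases n)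
    case 0
    with insert show ?thesis by simp
  next
    case (Suc m)
    have "lead_coeff (\<Prod>j\<in>A. [:- v j, 1:]) = 1"
      by (simp add: lead_coeff_prod)
    moreover have "degree (\<Prod>j\<in>A. [:- v j, 1:]) = n"
      using insert by (simp add: degree_prod_eq_sum_degree)
    ultimately show ?thesis
      using insert Suc by (simp add: algebra_simps)
  qed
qed

lemma poly_pderiv_prod_linear_factors:
  fixes v :: "'b \<Rightarrow> 'a::field"
  assumes "finite A" and "\<forall>j\<in>A. x \<noteq> v j"
  shows "poly (pderiv (\<Prod>j\<in>A. [:- v j, 1:])) x = (\<Prod>j\<in>A. x - v j) * (\<Sum>j\<in>A. 1 / (x - v j))"
proof -
  have "poly (pderiv (\<Prod>j\<in>A. [:- v j, 1:])) x = (\<Sum>a\<in>A. \<Prod>j\<in>A - {a}. x - v j)"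
    by (simp add: pderiv_prod pderiv_pCons poly_sum poly_prod)
  also have "\<dots> = (\<Sum>a\<in>A. (\<Prod>j\<in>A. x - v j) / (x - v a))"
    using assms by (intro sum.cong refl) (simp add: prod_diff1)
  finally show ?thesis
    by (simp add: sum_distrib_left)
qed

lemma poly_pderiv_linear_factor_mult:
  fixes R :: "'a::idom poly"
  shows "poly (pderiv ([:- a, 1:] * R)) a = poly R a"
    and "poly (pderiv (pderiv ([:- a, 1:] * R))) a = 2 * poly (pderiv R) a"
  by (simp_all add: pderiv_mult pderiv_add pderiv_pCons del: mult_pCons_left)

lemma poly_razavy_op_at_root:
  fixes v :: "'b \<Rightarrow> 'a::field"
  assumes "finite I" and "inj_on v I" and "k \<in> I" and "v k \<noteq> 0"
    and bethe: "(c * (1 - (v k)\<^sup>2) + (1 - of_nat N) * v k) / (v k)\<^sup>2 = (\<Sum>j\<in>I - {k}. 2 / (v j - v k))"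
  shows "poly (razavy_op c N s (\<Prod>j\<in>I. [:- v j, 1:])) (v k) = 0"
proof -
  define R where "R = (\<Prod>j\<in>I - {k}. [:- v j, 1:])"
  define D where "D = (\<Prod>j\<in>I - {k}. v k - v j)"
  define S where "S = (\<Sum>j\<in>I - {k}. 1 / (v k - v j))"
  have P: "(\<Prod>j\<in>I. [:- v j, 1:]) = [:- v k, 1:] * R"
    unfolding R_def using assms(1,3) by (rule prod.remove)
  have distinct: "\<forall>j\<in>I - {k}. v k \<noteq> v j"
    using assms(2,3) by (auto dest: inj_onD)
  have RD: "poly R (v k) = D"
    by (simp add: R_def D_def poly_prod)
  have R'D: "poly (pderiv R) (v k) = D * S"
    unfolding R_def D_def S_def using assms(1) distinct by (simp add: poly_pderiv_prod_linear_factors)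
  have "(\<Sum>j\<in>I - {k}. 2 / (v j - v k)) = - 2 * S"
    unfolding S_def sum_distrib_left by (intro sum.cong refl) (use divide_minus_right[of 2 "v k - v _"] in simp)
  with bethe assms(4) have bethe': "c * (1 - (v k)\<^sup>2) + (1 - of_nat N) * v k = - 2 * (v k)\<^sup>2 * S"
    by (simp add: field_simps)
  have "poly (razavy_op c N s (\<Prod>j\<in>I. [:- v j, 1:])) (v k)
      = D * (- 2 * (v k)\<^sup>2 * S + (c * (v k)\<^sup>2 + (of_nat N - 1) * v k - c))"
    unfolding poly_razavy_op P poly_pderiv_linear_factor_mult RD R'D by (simp add: algebra_simps)
  also have "\<dots> = 0"
    using bethe' by (simp add: algebra_simps)
  finally show ?thesis .
qed

lemma razavy_op_prod_linear_factors_eq_0: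
  fixes v :: "'b \<Rightarrow> 'a::field"
  assumes "finite I" and "I \<noteq> {}" and "inj_on v I" and "\<forall>k\<in>I. v k \<noteq> 0"
    and "\<forall>k\<in>I. (c * (1 - (v k)\<^sup>2) + (1 - of_nat (card I)) * v k) / (v k)\<^sup>2
                = (\<Sum>j\<in>I - {k}. 2 / (v j - v k))"
  shows "razavy_op c (card I) (\<Sum>j\<in>I. v j) (\<Prod>j\<in>I. [:- v j, 1:]) = 0"
proof -
  obtain n where n: "card I = Suc n"
    using assms(1,2) by (cases "card I") auto
  have "degree (\<Prod>j\<in>I. [:- v j, 1:]) = Suc n"
    using n by (simp add: degree_prod_eq_sum_degree)
  moreover have "lead_coeff (\<Prod>j\<in>I. [:- v j, 1:]) = 1"
    by (simp add: lead_coeff_prod)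
  ultimately have "degree (razavy_op c (Suc n) (\<Sum>j\<in>I. v j) (\<Prod>j\<in>I. [:- v j, 1:])) < Suc n"
    using assms(1) n by (intro degree_razavy_op_less coeff_prod_linear_factors_pred)
  moreover have "card (v ` I) = Suc n"
    using assms(3) n by (simp add: card_image)
  ultimately show ?thesis
    using assms n by (intro poly_eqI_degree[of "v ` I"]) (auto intro: poly_razavy_op_at_root)
qed

lemma razavy_gauge_transform:
  fixes c s :: "'a::{banach, real_normed_field}" and P :: "'a poly" and N :: nat
  defines "G \<equiv> \<lambda>z. exp (- c * cosh z - of_nat N * z / 2)"
  defines "f \<equiv> \<lambda>z. G z * poly P (exp z)"
  obtains f' f'' where "\<And>z. (f has_field_derivative f' z) (at z)"
    and "\<And>z. (f' has_field_derivative f'' z) (at z)"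
    and "\<And>z. - f'' z + (c\<^sup>2 * (sinh z)\<^sup>2 - (of_nat N + 1) * c * cosh z) * f z
               = (c * s - (of_nat N)\<^sup>2 / 4) * f z + G z * poly (razavy_op c N s P) (exp z)"
proof -
  define A where "A z = - c * sinh z - of_nat N / 2" for z
  define u' where "u' z = exp z * poly (pderiv P) (exp z)" for z
  define u'' where "u'' z = exp z * poly (pderiv P) (exp z) + (exp z)\<^sup>2 * poly (pderiv (pderiv P)) (exp z)" for z
  have dG: "(G has_field_derivative G z * A z) (at z)" for z
    unfolding G_def A_def by (auto intro!: derivative_eq_intros)
  have dA: "(A has_field_derivative - c * cosh z) (at z)" for z
    unfolding A_def by (auto intro!: derivative_eq_intros)
  have du: "((\<lambda>z. poly P (exp z)) has_field_derivative u' z) (at z)" for z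
    unfolding u'_def by (auto intro!: derivative_eq_intros DERIV_chain2[OF poly_DERIV])
  have du': "(u' has_field_derivative u'' z) (at z)" for z
    unfolding u'_def u''_def
    by (auto intro!: derivative_eq_intros DERIV_chain2[OF poly_DERIV] simp: power2_eq_square algebra_simps)
  define f' where "f' z = G z * (A z * poly P (exp z) + u' z)" for z
  define f'' where "f'' z = G z * (u'' z + 2 * A z * u' z + ((A z)\<^sup>2 - c * cosh z) * poly P (exp z))" for z
  show thesis
  proof
    show "(f has_field_derivative f' z) (at z)" for z
      unfolding f_def f'_def by (rule DERIV_cong[OF DERIV_mult[OF dG du]]) (simp add: algebra_simps)
    show "(f' has_field_derivative f'' z) (at z)" for z
      unfolding f'_def f''_def
      by (rule DERIV_cong[OF DERIV_mult[OF dG DERIV_add[OF DERIV_mult[OF dA du] du']]])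
        (simp add: u'_def power2_eq_square algebra_simps)
    show "- f'' z + (c\<^sup>2 * (sinh z)\<^sup>2 - (of_nat N + 1) * c * cosh z) * f z
        = (c * s - (of_nat N)\<^sup>2 / 4) * f z + G z * poly (razavy_op c N s P) (exp z)" for z
    proof -
      have "exp z * exp (- z) = 1" by (rule exp_minus_inverse)
      then show ?thesis
        unfolding f_def f''_def A_def u'_def u''_def poly_razavy_op sinh_field_def cosh_field_def
        by (simp add: field_simps power2_eq_square)
    qed
  qed
qed

lemma of_real_cosh: "of_real (cosh x) = (cosh (of_real x) :: 'a::{banach, real_normed_field})"
  by (simp add: cosh_field_def flip: exp_of_real)

lemma of_real_sinh: "of_real (sinh x) = (sinh (of_real x) :: 'a::{banach, real_normed_field})"
  by (simp add: sinh_field_def flip: exp_of_real)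

lemma psiN_eq_poly_exp:
  "psiN \<gamma> N v x = exp (- of_real \<gamma> * cosh (of_real x) - of_nat N * of_real x / 2)
     * poly (\<Prod>j\<in>{1..N}. [:- v j, 1:]) (exp (of_real x))"
proof -
  define z where "z = complex_of_real x"
  have "exp z = exp (z / 2) * exp (z / 2)"
    by (simp flip: exp_add)
  then have factor: "complex_of_real (exp (x / 2)) - v j * complex_of_real (exp (- x / 2))
      = exp (- z / 2) * (exp z - v j)" for j
    by (simp add: z_def algebra_simps exp_minus_inverse flip: exp_of_real exp_add)
  have "(\<Prod>j\<in>{1..N}. exp (- z / 2) * (exp z - v j)) = exp (- z / 2) ^ N * (\<Prod>j\<in>{1..N}. exp z - v j)"
    by (simp add: prod.distrib)
  also have "\<dots> = exp (- of_nat N * z / 2) * poly (\<Prod>j\<in>{1..N}. [:- v j, 1:]) (exp z)"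
    by (simp add: poly_prod flip: exp_of_nat_mult)
  finally have "psiN \<gamma> N v x
      = exp (- of_real \<gamma> * cosh z) * (exp (- of_nat N * z / 2) * poly (\<Prod>j\<in>{1..N}. [:- v j, 1:]) (exp z))"
    unfolding psiN_def factor by (simp add: z_def of_real_cosh flip: exp_of_real)
  also have "\<dots> = exp (- of_real \<gamma> * cosh z + - of_nat N * z / 2) * poly (\<Prod>j\<in>{1..N}. [:- v j, 1:]) (exp z)"
    by (simp only: exp_add mult.assoc)
  finally show ?thesis
    by (simp add: z_def)
qed

lemma psiN_schroedinger:
  "- vector_derivative (\<lambda>t. vector_derivative (psiN \<gamma> N v) (at t)) (at x)
      + complex_of_real (VN \<gamma> N x) * psiN \<gamma> N v x
   = (of_real \<gamma> * (\<Sum>j\<in>{1..N}. v j) - (of_nat N)\<^sup>2 / 4) * psiN \<gamma> N v x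
      + exp (- of_real \<gamma> * cosh (of_real x) - of_nat N * of_real x / 2)
        * poly (razavy_op (of_real \<gamma>) N (\<Sum>j\<in>{1..N}. v j) (\<Prod>j\<in>{1..N}. [:- v j, 1:])) (exp (of_real x))"
proof -
  define c where "c = complex_of_real \<gamma>"
  define s where "s = (\<Sum>j\<in>{1..N}. v j)"
  define P where "P = (\<Prod>j\<in>{1..N}. [:- v j, 1:])"
  obtain f' f'' where f': "\<And>z. ((\<lambda>z. exp (- c * cosh z - of_nat N * z / 2) * poly P (exp z))
        has_field_derivative f' z) (at z)"
    and f'': "\<And>z. (f' has_field_derivative f'' z) (at z)"
    and ode: "\<And>z. - f'' z + (c\<^sup>2 * (sinh z)\<^sup>2 - (of_nat N + 1) * c * cosh z)
                    * (exp (- c * cosh z - of_nat N * z / 2) * poly P (exp z))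
      = (c * s - (of_nat N)\<^sup>2 / 4) * (exp (- c * cosh z - of_nat N * z / 2) * poly P (exp z))
        + exp (- c * cosh z - of_nat N * z / 2) * poly (razavy_op c N s P) (exp z)"
    by (rule razavy_gauge_transform[of c N P s]) blast
  have "vector_derivative (psiN \<gamma> N v) (at t) = f' (of_real t)" for t
    unfolding psiN_eq_poly_exp c_def[symmetric] P_def[symmetric]
    by (rule vector_derivative_at[OF has_vector_derivative_real_field[OF f']])
  then have "vector_derivative (\<lambda>t. vector_derivative (psiN \<gamma> N v) (at t)) (at x) = f'' (of_real x)"
    by (simp add: vector_derivative_at[OF has_vector_derivative_real_field[OF f'']])
  moreover have "complex_of_real (VN \<gamma> N x)
      = c\<^sup>2 * (sinh (of_real x))\<^sup>2 - (of_nat N + 1) * c * cosh (of_real x)"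
    by (simp add: VN_def c_def of_real_sinh of_real_cosh)
  ultimately show ?thesis
    unfolding psiN_eq_poly_exp c_def[symmetric] P_def[symmetric] s_def[symmetric]
    using ode[of "of_real x"] by simp
qed

theorem mainTheorem5:
  fixes N :: nat and k calE \<gamma> :: real and v :: "nat \<Rightarrow> complex" and E :: complex
  assumes "N \<ge> 1" and "k > 0" and "calE > 0" and "\<gamma> = calE / k"
    and "inj_on v {1..N}" and "\<forall>i\<in>{1..N}. v i \<noteq> 0"
    and "\<forall>i\<in>{1..N}.
      (of_real calE * (1 - (v i)^2) + of_real k * (1 - of_nat N) * v i) / (of_real k * (v i)^2)
        = (\<Sum>j\<in>{1..N} - {i}. 2 / (v j - v i))"
    and "E = - of_real k * (of_nat N)^2 / 8 + of_real calE / 2 * (\<Sum>j\<in>{1..N}. v j)"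
  shows "\<forall>x::real.
    - vector_derivative (\<lambda>t. vector_derivative (psiN \<gamma> N v) (at t)) (at x)
      + complex_of_real (VN \<gamma> N x) * psiN \<gamma> N v x
    = 2 * E / of_real k * psiN \<gamma> N v x"
proof -
  define c where "c = complex_of_real \<gamma>"
  have k: "complex_of_real k \<noteq> 0"
    using assms(2) by simp
  have "calE = k * \<gamma>"
    using assms(2,4) by simp
  then have calE: "complex_of_real calE = of_real k * c"
    by (simp add: c_def)
  have "(c * (1 - (v i)\<^sup>2) + (1 - of_nat N) * v i) / (v i)\<^sup>2
      = (of_real calE * (1 - (v i)\<^sup>2) + of_real k * (1 - of_nat N) * v i) / (of_real k * (v i)\<^sup>2)" for i
    unfolding calE mult.assoc distrib_left[symmetric] using k by simp
  then have "razavy_op c N (\<Sum>j\<in>{1..N}. v j) (\<Prod>j\<in>{1..N}. [:- v j, 1:]) = 0"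
    using razavy_op_prod_linear_factors_eq_0[of "{1..N}" v c] assms(1,5,6,7) by simp
  moreover have "2 * E / of_real k = c * (\<Sum>j\<in>{1..N}. v j) - (of_nat N)\<^sup>2 / 4"
    using k by (simp add: assms(8) calE field_simps)
  ultimately show ?thesis
    using psiN_schroedinger[of \<gamma> N v] by (simp add: c_def)
qed

end
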